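(* Let $B$ be the infinite complete binary tree, i.e. the rooted tree starting from a single root vertex in which every vertex has exactly two children. Then $\chi_{td}(B) = 7$.
   Context: For a (possibly infinite) simple graph $G$ and a positive integer $k$, a proper $k$-total difference labeling of $G$ is a function $f: V(G)\to\{1,\dots,k\}$, extended to edges by $f(\{u,v\}) = |f(u)-f(v)|$, such that: (i) adjacent vertices receive different labels; (ii) two distinct edges sharing a vertex receive different labels; (iii) no edge receives the same label as either of its endpoints. $\chi_{td}(G)$ denotes the smallest $k$ for which $G$ has a proper $k$-total difference labeling. *)

theory Defs
  imports Main
begin

definition simple_graph :: "'a set \<Rightarrow> ('a \<Rightarrow> 'a \<Rightarrow> bool) \<Rightarrow> bool" where
  "simple_graph V E \<longleftrightarrow> (\<forall>u v. E u v \<longrightarrow> u \<in> V \<and> v \<in> V \<and> u \<noteq> v \<and> E v u)"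

definition edge_label :: "('a \<Rightarrow> nat) \<Rightarrow> 'a \<Rightarrow> 'a \<Rightarrow> int" where
  "edge_label f u v = \<bar>int (f u) - int (f v)\<bar>"

definition proper_total_difference_labeling ::
  "'a set \<Rightarrow> ('a \<Rightarrow> 'a \<Rightarrow> bool) \<Rightarrow> nat \<Rightarrow> ('a \<Rightarrow> nat) \<Rightarrow> bool" where
  "proper_total_difference_labeling V E k f \<longleftrightarrow>
     (\<forall>v\<in>V. f v \<in> {1..k}) \<and>
     (\<forall>u v. E u v \<longrightarrow> f u \<noteq> f v) \<and>
     (\<forall>u v w. E u v \<and> E u w \<and> v \<noteq> w \<longrightarrow> edge_label f u v \<noteq> edge_label f u w) \<and>
     (\<forall>u v. E u v \<longrightarrow> edge_label f u v \<noteq> int (f u) \<and> edge_label f u v \<noteq> int (f v))"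

definition chi_td :: "'a set \<Rightarrow> ('a \<Rightarrow> 'a \<Rightarrow> bool) \<Rightarrow> nat" where
  "chi_td V E = (LEAST k. k > 0 \<and> (\<exists>f. proper_total_difference_labeling V E k f))"

text \<open>Infinite complete binary tree: vertices are finite bool lists (root = []);
the children of xs are True # xs and False # xs.\<close>
definition bintree_V :: "bool list set" where
  "bintree_V = UNIV"

definition bintree_E :: "bool list \<Rightarrow> bool list \<Rightarrow> bool" where
  "bintree_E u v \<longleftrightarrow> (\<exists>b. u = b # v) \<or> (\<exists>b. v = b # u)"

end

theory Submission
  imports Defs
begin

text \<open>Upper bound: label the root 1 and let the label of a child depend only on the label of
its parent and on its side; the finitely many stars this produces are all proper with labels 1..7.

Lower bound: a vertex labelled \<open>a\<close> with three neighbours needs three distinct differences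
\<open>\<bar>a - x\<bar>\<close> with \<open>x \<noteq> a\<close>, \<open>x \<noteq> 2a\<close>, \<open>a \<noteq> 2x\<close>. With labels 1..6 this forbids label 3 at
every non-root vertex, then label 2 at every vertex none of whose neighbours is labelled 3, then
label 5 where no neighbour is labelled 2 or 3, and finally every label where no neighbour is
labelled 2, 3 or 5. Going one level deeper each time, a vertex at depth 4 has no label left.\<close>

text \<open>\<open>a\<close> is the label of a vertex and \<open>xs\<close> lists the labels of its neighbours.\<close>
definition proper_star :: "nat \<Rightarrow> nat \<Rightarrow> nat list \<Rightarrow> bool" where
  "proper_star k a xs \<longleftrightarrow> a \<in> {1..k} \<and> set xs \<subseteq> {1..k} \<and>
     (\<forall>x\<in>set xs. x \<noteq> a \<and> \<bar>int a - int x\<bar> \<noteq> int a \<and> \<bar>int a - int x\<bar> \<noteq> int x) \<and>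
     distinct (map (\<lambda>x. \<bar>int a - int x\<bar>) xs)"

lemma proper_labelingD:
  assumes "proper_total_difference_labeling V E k f"
  shows "v \<in> V \<Longrightarrow> f v \<in> {1..k}"
    and "E u v \<Longrightarrow> f u \<noteq> f v"
    and "E u v \<Longrightarrow> E u w \<Longrightarrow> v \<noteq> w \<Longrightarrow> edge_label f u v \<noteq> edge_label f u w"
    and "E u v \<Longrightarrow> edge_label f u v \<noteq> int (f u)"
    and "E u v \<Longrightarrow> edge_label f u v \<noteq> int (f v)"
  using assms unfolding proper_total_difference_labeling_def by blast+

lemma proper_labeling_mono:
  assumes "proper_total_difference_labeling V E k f" and "k \<le> k'"
  shows "proper_total_difference_labeling V E k' f"
  using assms unfolding proper_total_difference_labeling_def by auto

lemma simple_graph_adjacent_in_vertices: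
  assumes "simple_graph V E" and "E u v"
  shows "u \<in> V" "v \<in> V"
  using assms unfolding simple_graph_def by blast+

lemma proper_labeling_proper_star:
  assumes f: "proper_total_difference_labeling V E k f" and G: "simple_graph V E"
    and "u \<in> V" and "distinct vs" and nbrs: "\<And>v. v \<in> set vs \<Longrightarrow> E u v"
  shows "proper_star k (f u) (map f vs)"
  unfolding proper_star_def
proof (intro conjI ballI)
  show "f u \<in> {1..k}" using proper_labelingD(1)[OF f \<open>u \<in> V\<close>] .
  show "set (map f vs) \<subseteq> {1..k}"
    using proper_labelingD(1)[OF f] simple_graph_adjacent_in_vertices(2)[OF G nbrs] by auto
next
  fix x assume "x \<in> set (map f vs)"
  then obtain v where "v \<in> set vs" and x: "x = f v" by auto
  with nbrs have "E u v" by blast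
  then show "x \<noteq> f u" "\<bar>int (f u) - int x\<bar> \<noteq> int (f u)" "\<bar>int (f u) - int x\<bar> \<noteq> int x"
    using proper_labelingD(2,4,5)[OF f] x unfolding edge_label_def by metis+
next
  have "inj_on (\<lambda>v. \<bar>int (f u) - int (f v)\<bar>) (set vs)"
    using proper_labelingD(3)[OF f] nbrs unfolding inj_on_def edge_label_def by blast
  with \<open>distinct vs\<close> show "distinct (map (\<lambda>x. \<bar>int (f u) - int x\<bar>) (map f vs))"
    by (simp add: distinct_map comp_def)
qed

lemma proper_labelingI:
  assumes G: "simple_graph V E"
    and stars: "\<And>u. u \<in> V \<Longrightarrow>
      \<exists>vs. distinct vs \<and> set vs = {v. E u v} \<and> proper_star k (f u) (map f vs)"
  shows "proper_total_difference_labeling V E k f"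
proof -
  have star_at: "\<exists>vs. distinct vs \<and> set vs = {v. E u v} \<and> proper_star k (f u) (map f vs)"
    if "E u v" for u v
    using stars[OF simple_graph_adjacent_in_vertices(1)[OF G that]] .
  show ?thesis
    unfolding proper_total_difference_labeling_def
  proof (intro conjI allI impI ballI)
    fix u assume "u \<in> V"
    then show "f u \<in> {1..k}" using stars unfolding proper_star_def by blast
  next
    fix u v assume "E u v"
    then obtain vs where "set vs = {v. E u v}" and star: "proper_star k (f u) (map f vs)"
      using star_at by blast
    with \<open>E u v\<close> have "v \<in> set vs" by blast
    with star show "f u \<noteq> f v" "edge_label f u v \<noteq> int (f u)" "edge_label f u v \<noteq> int (f v)"
      unfolding proper_star_def edge_label_def by auto
  next
    fix u v w assume "E u v \<and> E u w \<and> v \<noteq> w"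
    then obtain vs where "distinct vs" "set vs = {v. E u v}" "proper_star k (f u) (map f vs)"
      using star_at by blast
    then have "inj_on (\<lambda>v. \<bar>int (f u) - int (f v)\<bar>) {v. E u v}"
      unfolding proper_star_def by (simp add: distinct_map comp_def)
    with \<open>E u v \<and> E u w \<and> v \<noteq> w\<close> show "edge_label f u v \<noteq> edge_label f u w"
      unfolding inj_on_def edge_label_def by blast
  qed
qed

lemma simple_graph_bintree: "simple_graph bintree_V bintree_E"
  unfolding simple_graph_def bintree_V_def bintree_E_def by auto

fun bintree_neighbours :: "bool list \<Rightarrow> bool list list" where
  "bintree_neighbours [] = [[True], [False]]"
| "bintree_neighbours (c # w) = [w, True # c # w, False # c # w]"

lemma distinct_bintree_neighbours: "distinct (bintree_neighbours u)"
  by (cases u) (auto dest: arg_cong[of _ _ length])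

lemma set_bintree_neighbours: "set (bintree_neighbours u) = {v. bintree_E u v}"
  by (cases u) (auto simp: bintree_E_def)

text \<open>Entry 0 of both tables is a dummy: labels start at 1.\<close>
definition child_label :: "nat \<Rightarrow> bool \<Rightarrow> nat" where
  "child_label a b = (if b then [0, 3, 5, 2, 5, 1, 1, 1] ! a else [0, 4, 6, 7, 6, 3, 5, 2] ! a)"

fun bintree_labeling :: "bool list \<Rightarrow> nat" where
  "bintree_labeling [] = 1"
| "bintree_labeling (b # v) = child_label (bintree_labeling v) b"

lemma child_label_range: "a \<in> {1..7} \<Longrightarrow> child_label a b \<in> {1..7}"
  by (cases b) (auto simp: child_label_def numeral_eq_Suc less_Suc_eq_le le_Suc_eq)

lemma bintree_labeling_range: "bintree_labeling v \<in> {1..7}"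
  by (induction v) (simp, metis child_label_range bintree_labeling.simps(2))

lemma child_label_proper_star:
  assumes "p \<in> {1..7}"
  shows "proper_star 7 (child_label p b)
           [p, child_label (child_label p b) True, child_label (child_label p b) False]"
proof -
  from assms have "p \<in> {1, 2, 3, 4, 5, 6, 7}" by auto
  then show ?thesis by (cases b) (auto simp: proper_star_def child_label_def)
qed

lemma bintree_labeling_proper:
  "proper_total_difference_labeling bintree_V bintree_E 7 bintree_labeling"
proof (rule proper_labelingI[OF simple_graph_bintree])
  fix u :: "bool list"
  have "proper_star 7 (bintree_labeling u) (map bintree_labeling (bintree_neighbours u))"
  proof (cases u)
    case Nil
    then show ?thesis by (simp add: proper_star_def child_label_def)
  next
    case (Cons c w)
    then show ?thesis
      using child_label_proper_star[OF bintree_labeling_range[of w]] by simp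
  qed
  with distinct_bintree_neighbours set_bintree_neighbours show
    "\<exists>vs. distinct vs \<and> set vs = {v. bintree_E u v} \<and>
       proper_star 7 (bintree_labeling u) (map bintree_labeling vs)"
    by blast
qed

definition usable_differences :: "nat \<Rightarrow> nat \<Rightarrow> nat set \<Rightarrow> int set" where
  "usable_differences k a S = (\<lambda>x. \<bar>int a - int x\<bar>) `
     set (filter (\<lambda>x. x \<notin> S \<and> x \<noteq> a \<and> \<bar>int a - int x\<bar> \<noteq> int a \<and> \<bar>int a - int x\<bar> \<noteq> int x)
       [1..<Suc k])"

lemma proper_star_length_le_card_usable_differences:
  assumes star: "proper_star k a xs" and "set xs \<inter> S = {}"
  shows "length xs \<le> card (usable_differences k a S)"
proof -
  let ?d = "\<lambda>x. \<bar>int a - int x\<bar>"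
  have "set xs \<subseteq> set (filter (\<lambda>x. x \<notin> S \<and> x \<noteq> a \<and> ?d x \<noteq> int a \<and> ?d x \<noteq> int x)
      [1..<Suc k])"
  proof
    fix x assume "x \<in> set xs"
    then have "x \<in> {1..k}" "x \<noteq> a" "?d x \<noteq> int a" "?d x \<noteq> int x" "x \<notin> S"
      using assms unfolding proper_star_def by auto
    then show "x \<in> set (filter (\<lambda>x. x \<notin> S \<and> x \<noteq> a \<and> ?d x \<noteq> int a \<and> ?d x \<noteq> int x)
      [1..<Suc k])"
      by (simp del: upt_Suc)
  qed
  then have "?d ` set xs \<subseteq> usable_differences k a S"
    unfolding usable_differences_def by (rule image_mono)
  then have "card (?d ` set xs) \<le> card (usable_differences k a S)"
    by (rule card_mono[rotated]) (simp add: usable_differences_def)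
  moreover have "card (?d ` set xs) = length xs"
    using star unfolding proper_star_def by (metis distinct_card length_map set_map)
  ultimately show ?thesis by simp
qed

text \<open>Labels that no vertex at depth at least \<open>n\<close> can carry in a labelling with labels 1..6.\<close>
fun excluded_labels :: "nat \<Rightarrow> nat set" where
  "excluded_labels 0 = {}"
| "excluded_labels (Suc 0) = {3}"
| "excluded_labels (Suc (Suc 0)) = {2, 3}"
| "excluded_labels (Suc (Suc (Suc 0))) = {2, 3, 5}"
| "excluded_labels _ = UNIV"

lemma excluded_labels_step:
  assumes "a \<in> {1..6}" and "3 \<le> card (usable_differences 6 a (excluded_labels n))"
  shows "a \<notin> excluded_labels (Suc n)"
proof -
  from assms(1) have "a \<in> {1, 2, 3, 4, 5, 6}" by auto
  then show ?thesis
    using assms(2) by (cases n rule: excluded_labels.cases)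
      (auto simp: usable_differences_def upt_rec card_insert_if)
qed

lemma no_proper_labeling_6:
  "\<not> proper_total_difference_labeling bintree_V bintree_E 6 f"
proof
  assume f: "proper_total_difference_labeling bintree_V bintree_E 6 f"
  have star: "proper_star 6 (f u) (map f (bintree_neighbours u))" for u
    using proper_labeling_proper_star[OF f simple_graph_bintree _ distinct_bintree_neighbours]
    by (simp add: bintree_V_def set_bintree_neighbours)
  have "f u \<notin> excluded_labels n" if "n \<le> length u" for n u
    using that
  proof (induction n arbitrary: u)
    case 0
    then show ?case by simp
  next
    case (Suc n)
    then obtain c w where u: "u = c # w" and "n \<le> length w" by (cases u) auto
    then have "set (map f (bintree_neighbours u)) \<inter> excluded_labels n = {}"
      using Suc.IH by auto
    from proper_star_length_le_card_usable_differences[OF star this]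
    have "3 \<le> card (usable_differences 6 (f u) (excluded_labels n))"
      by (simp add: u)
    moreover have "f u \<in> {1..6}"
      using star[of u] unfolding proper_star_def by blast
    ultimately show ?case by (intro excluded_labels_step)
  qed
  then have "f (replicate 4 True) \<notin> excluded_labels 4" by simp
  then show False by (simp add: eval_nat_numeral)
qed

theorem mainTheorem6:
  shows "chi_td bintree_V bintree_E = 7"
  unfolding chi_td_def
proof (rule Least_equality)
  show "0 < (7::nat) \<and> (\<exists>f. proper_total_difference_labeling bintree_V bintree_E 7 f)"
    using bintree_labeling_proper by auto
next
  fix k assume "0 < k \<and> (\<exists>f. proper_total_difference_labeling bintree_V bintree_E k f)"
  then obtain f where "proper_total_difference_labeling bintree_V bintree_E k f" by blast
  then show "7 \<le> k"
    using no_proper_labeling_6 proper_labeling_mono[of bintree_V bintree_E k f 6] by force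
qed

end
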